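(* Let $m\ge 1$, let $D_{2m}=\langle u,v : u^m=e=v^2,\ vu=u^{m-1}v\rangle$, let $C_m=\langle u\rangle$ and $C_mv=\{u^iv: 0\le i<m\}$. If $S\subseteq C_mv$, then $D_{2m}$ has an $S$-sequencing.
   Context: For a group $G$ with identity $e$ and a set $S\subseteq G\setminus\{e\}$ with $|S|=k$, an $S$-sequencing of $G$ is an ordering $(g_1,\dots,g_k)$ of the elements of $S$ (each used exactly once) such that the partial products $h_0=e$, $h_i=g_1g_2\cdots g_i$ ($1\le i\le k$) are pairwise distinct. *)

theory Defs
  imports "HOL-Algebra.Group"
begin

definition partial_prod :: "('a, 'b) monoid_scheme \<Rightarrow> 'a list \<Rightarrow> nat \<Rightarrow> 'a" where
  "partial_prod G gs i = foldr (\<lambda>g acc. g \<otimes>\<^bsub>G\<^esub> acc) (take i gs) \<one>\<^bsub>G\<^esub>"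

definition is_S_sequencing :: "('a, 'b) monoid_scheme \<Rightarrow> 'a set \<Rightarrow> 'a list \<Rightarrow> bool" where
  "is_S_sequencing G S gs \<longleftrightarrow>
     S \<subseteq> carrier G - {\<one>\<^bsub>G\<^esub>} \<and> distinct gs \<and> set gs = S \<and>
     distinct (map (partial_prod G gs) [0..<length gs + 1])"

definition has_S_sequencing :: "('a, 'b) monoid_scheme \<Rightarrow> 'a set \<Rightarrow> bool" where
  "has_S_sequencing G S \<longleftrightarrow> (\<exists>gs. is_S_sequencing G S gs)"

text \<open>The dihedral group D_{2m} of order 2m, concretely: the pair (i, b) stands for u^i v^b
  (0 \<le> i < m). Multiplication: u^i v^a u^j v^b = u^(i + (-1)^a j) v^(a+b).\<close>
definition dihedral :: "nat \<Rightarrow> (nat \<times> bool) monoid" where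
  "dihedral m = \<lparr> carrier = {(i, b). i < m},
     mult = (\<lambda>(i, a) (j, b). ((if a then i + (m - j) else i + j) mod m, a \<noteq> b)),
     one = (0, False) \<rparr>"

definition dih_u :: "nat \<Rightarrow> nat \<times> bool" where "dih_u m = (1 mod m, False)"
definition dih_v :: "nat \<Rightarrow> nat \<times> bool" where "dih_v m = (0, True)"

definition dih_Cm :: "nat \<Rightarrow> (nat \<times> bool) set" where
  "dih_Cm m = {dih_u m [^]\<^bsub>dihedral m\<^esub> i | i. i < m}"
definition dih_Cmv :: "nat \<Rightarrow> (nat \<times> bool) set" where
  "dih_Cmv m = {(dih_u m [^]\<^bsub>dihedral m\<^esub> i) \<otimes>\<^bsub>dihedral m\<^esub> dih_v m | i. i < m}"



end

theory Submission
  imports Defs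
begin

(* Order the reflections in S as u^x_1 v, ..., u^x_k v with 0 <= x_1 < ... < x_k < m.
   Since u^a v u^b v^c = u^(a-b) v^(c+1), the i-th partial product is u^A_i v^i with the
   alternating sum A_i = x_1 - x_2 + ... +- x_i.  Partial products of different parity differ
   in the v-component.  For i < j of equal parity, A_j - A_i = +-((x_(i+1) - x_(i+2)) + ...
   + (x_(j-1) - x_j)) is a sum of negative gaps, hence lies strictly between -m and 0 and is
   not divisible by m. *)

fun alt_sum :: "int list \<Rightarrow> int" where
  "alt_sum [] = 0"
| "alt_sum (a # xs) = a - alt_sum xs"

lemma alt_sum_append: "alt_sum (xs @ ys) = alt_sum xs + (-1) ^ length xs * alt_sum ys"
  by (induction xs) (auto simp: algebra_simps)

lemma alt_sum_even_sorted_bounds: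
  assumes "sorted_wrt (<) xs" "even (length xs)" "xs \<noteq> []"
  shows "hd xs - last xs \<le> alt_sum xs \<and> alt_sum xs < 0"
  using assms
proof (induction xs rule: induct_list012)
  case (3 a b rest)
  then show ?case
    by (cases rest) auto
qed auto

lemma alt_sum_take_mod_neq:
  fixes xs :: "int list"
  assumes "sorted_wrt (<) xs" and range: "set xs \<subseteq> {0..<m}"
    and "i < j" "j \<le> length xs" "even (j - i)"
  shows "alt_sum (take i xs) mod m \<noteq> alt_sum (take j xs) mod m"
proof
  define seg where "seg = take (j - i) (drop i xs)"
  have "take j xs = take i xs @ seg"
    using \<open>i < j\<close> by (metis seg_def le_add_diff_inverse less_imp_le take_add)
  then have diff: "alt_sum (take j xs) - alt_sum (take i xs) = (-1) ^ i * alt_sum seg"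
    using \<open>i < j\<close> \<open>j \<le> length xs\<close> by (simp add: alt_sum_append)
  have seg: "seg \<noteq> []" "even (length seg)" "sorted_wrt (<) seg"
    using assms by (auto simp: seg_def)
  have "set seg \<subseteq> {0..<m}"
    using range by (auto simp: seg_def dest!: in_set_takeD in_set_dropD)
  then have "0 \<le> hd seg" "last seg < m"
    using hd_in_set[OF seg(1)] last_in_set[OF seg(1)] by auto
  moreover have "hd seg - last seg \<le> alt_sum seg" "alt_sum seg < 0"
    using alt_sum_even_sorted_bounds[OF seg(3,2,1)] by auto
  ultimately have "- m < alt_sum seg" "alt_sum seg < 0"
    by linarith+
  assume "alt_sum (take i xs) mod m = alt_sum (take j xs) mod m"
  then have "m dvd (-1) ^ i * alt_sum seg"
    by (metis diff mod_eq_dvd_iff)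
  then have "m dvd alt_sum seg"
    by (simp add: dvd_mult_unit_iff' is_unit_power_iff)
  with \<open>- m < alt_sum seg\<close> \<open>alt_sum seg < 0\<close> show False
    using dvd_imp_le_int[of "alt_sum seg" m] by linarith
qed

lemma dih_u_pow: "dih_u m [^]\<^bsub>dihedral m\<^esub> i = (i mod m, False)"
  by (induction i) (simp_all add: dihedral_def dih_u_def mod_Suc_eq)

lemma dih_Cmv_eq: "0 < m \<Longrightarrow> dih_Cmv m = (\<lambda>i. (i, True)) ` {..<m}"
  unfolding dih_Cmv_def dih_u_pow by (force simp: dih_v_def dihedral_def)

lemma foldr_dihedral_reflections:
  assumes "0 < m"
  shows "foldr (\<lambda>g acc. g \<otimes>\<^bsub>dihedral m\<^esub> acc) (map (\<lambda>a. (a, True)) xs) \<one>\<^bsub>dihedral m\<^esub>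
           = (nat (alt_sum (map int xs) mod int m), odd (length xs))"
proof (induction xs)
  case Nil
  then show ?case by (simp add: dihedral_def)
next
  case (Cons a xs)
  define r where "r = alt_sum (map int xs) mod int m"
  have "0 \<le> r" "r < int m"
    using assms by (simp_all add: r_def)
  then have "int ((a + (m - nat r)) mod m) = (int a - r) mod int m"
    by (simp add: zmod_int of_nat_diff) (metis diff_add_eq mod_add_self2)
  also have "\<dots> = alt_sum (map int (a # xs)) mod int m"
    by (simp add: r_def mod_diff_right_eq)
  finally show ?case
    using Cons by (simp add: dihedral_def r_def flip: nat_int)
qed

lemma dihedral_reflections_sequencing:
  assumes "0 < m" "sorted_wrt (<) xs" "set xs \<subseteq> {..<m}"
  shows "is_S_sequencing (dihedral m) ((\<lambda>a. (a, True)) ` set xs) (map (\<lambda>a. (a, True)) xs)"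
proof -
  let ?h = "partial_prod (dihedral m) (map (\<lambda>a. (a, True)) xs)"
  have h: "?h i = (nat (alt_sum (take i (map int xs)) mod int m), odd i)" if "i \<le> length xs" for i
    using foldr_dihedral_reflections[OF assms(1), of "take i xs"] that
    by (simp add: partial_prod_def take_map min_def)
  have "?h i \<noteq> ?h j" if "i < j" "j \<le> length xs" for i j
  proof (cases "even (j - i)")
    case True
    have "sorted_wrt (<) (map int xs)" "set (map int xs) \<subseteq> {0..<int m}"
      using assms(2,3) by (auto simp: sorted_wrt_map)
    from alt_sum_take_mod_neq[OF this that(1) _ True] that assms(1)
    show ?thesis by (simp add: h eq_nat_nat_iff)
  next
    case False
    then show ?thesis using that by (simp add: h)
  qed
  then have "inj_on ?h {0..<length xs + 1}"
    by (intro linorder_inj_onI') auto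
  then have "distinct (map ?h [0..<length xs + 1])"
    by (metis distinct_map distinct_upt set_upt)
  moreover have "distinct (map (\<lambda>a. (a, True)) xs)"
    using assms(2) by (simp add: distinct_map strict_sorted_iff inj_on_def)
  moreover have "(\<lambda>a. (a, True)) ` set xs \<subseteq> carrier (dihedral m) - {\<one>\<^bsub>dihedral m\<^esub>}"
    using assms(3) by (auto simp: dihedral_def)
  ultimately show ?thesis
    by (simp add: is_S_sequencing_def)
qed

theorem lemma3p1:
  fixes m :: nat and S :: "(nat \<times> bool) set"
  assumes "m \<ge> 1"
    and "S \<subseteq> dih_Cmv m"
  shows "has_S_sequencing (dihedral m) S"
proof -
  have "0 < m" using assms(1) by simp
  define xs where "xs = sorted_list_of_set (fst ` S)"
  have reflections: "S \<subseteq> (\<lambda>i. (i, True)) ` {..<m}"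
    using assms(2) dih_Cmv_eq[OF \<open>0 < m\<close>] by simp
  then have "finite (fst ` S)"
    by (meson finite_imageI finite_lessThan finite_subset)
  then have "S = (\<lambda>a. (a, True)) ` set xs" "sorted_wrt (<) xs" "set xs \<subseteq> {..<m}"
    using reflections by (force simp: xs_def)+
  then show ?thesis
    unfolding has_S_sequencing_def using dihedral_reflections_sequencing[OF \<open>0 < m\<close>] by metis
qed

end
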